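(* Let $X$ be a real Banach space, $x \in S(X)$ and $0<t<2$. Suppose there exist $f \in S(X^* )$ and $\alpha \in (0,1)$ such that $x \in S := S(B(X), f, \alpha)$ and $\operatorname{diam}(S) < t/5$. Then \[ s(x, f, t) \geq \min\left\{\frac{f(x) - \alpha}{\alpha}, \frac{t}{20}\right\} > 0. \]
   Context: $B(X)$ is the closed unit ball and $S(X)$ the unit sphere of $X$; $X^*$ is the dual space. For $f \in S(X^* )$ and real $\alpha$, the slice is $S(B(X), f, \alpha) := \{y \in B(X) : f(y) > \alpha\}$. For $0<t<2$, $f \in S(X^* )$ and $x \in S(X)$, define $s(x,f,t) := \inf\{\|x+y\| - 1 : y \in \ker f,\ \|y\| \geq t/4\}$. *)

theory Defs
  imports "HOL-Analysis.Analysis"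
begin

text \<open>Elements of the dual unit sphere S(X*) are represented as bounded linear
  functionals f with operator norm onorm f = 1.\<close>

definition slice :: "('a::real_normed_vector \<Rightarrow> real) \<Rightarrow> real \<Rightarrow> 'a set" where
  "slice f \<alpha> = {y. norm y \<le> 1 \<and> f y > \<alpha>}"

text \<open>s(x,f,t) = inf over kernel elements of norm at least t/4 of (norm(x+y) - 1),
  taken in the extended reals so that the infimum over an empty set is +infinity.\<close>

definition s_param :: "'a::real_normed_vector \<Rightarrow> ('a \<Rightarrow> real) \<Rightarrow> real \<Rightarrow> ereal" where
  "s_param x f t = Inf ((\<lambda>y. ereal (norm (x + y) - 1)) ` {y. f y = 0 \<and> norm y \<ge> t / 4})"

end

theory Submission
  imports Defs
begin

text \<open>A kernel vector y moves x to the hyperplane point x + y, on which f still exceeds \<alpha>.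
  If x + y is not much longer than 1 (namely \<open>norm (x + y) < f x / \<alpha>\<close>), then x + y or its
  normalisation lies in the slice, so the small diameter of the slice forces y to be short,
  up to the excess \<open>norm (x + y) - 1\<close>. Hence long kernel vectors y must make x + y long.\<close>

lemma bounded_slice: "bounded (slice f \<alpha>)"
  by (rule bounded_subset[of "cball 0 1"]) (auto simp: slice_def)

lemma dist_lt_of_diameter_slice:
  assumes "u \<in> slice f \<alpha>" "v \<in> slice f \<alpha>" "diameter (slice f \<alpha>) < d"
  shows "dist u v < d"
  using diameter_bounded_bound[OF bounded_slice assms(1,2)] assms(3) by simp

lemma sgn_in_slice:
  assumes "bounded_linear f" and "0 \<le> \<alpha>" and "f w > \<alpha> * norm w"
  shows "sgn w \<in> slice f \<alpha>"
proof -
  interpret f: bounded_linear f by fact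
  have "w \<noteq> 0" using assms(3) by auto
  then have "norm w > 0" by simp
  moreover have "f (sgn w) = f w / norm w"
    by (simp add: sgn_div_norm f.scaleR divide_inverse_commute)
  ultimately show ?thesis
    using assms(3) \<open>w \<noteq> 0\<close> by (simp add: slice_def norm_sgn pos_less_divide_eq mult.commute)
qed

lemma norm_diff_sgn:
  fixes w :: "'a::real_normed_vector"
  assumes "w \<noteq> 0"
  shows "norm (w - sgn w) = \<bar>norm w - 1\<bar>"
proof -
  have "w - sgn w = (1 - 1 / norm w) *\<^sub>R w" by (simp add: sgn_div_norm divide_inverse algebra_simps)
  then have "norm (w - sgn w) = \<bar>1 - 1 / norm w\<bar> * norm w" by simp
  also have "\<dots> = \<bar>norm w - 1\<bar>"
  proof -
    have "\<bar>1 - 1 / norm w\<bar> * norm w = \<bar>(1 - 1 / norm w) * norm w\<bar>" by (simp add: abs_mult)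
    also have "(1 - 1 / norm w) * norm w = norm w - 1" using assms by (simp add: algebra_simps)
    finally show ?thesis .
  qed
  finally show ?thesis .
qed

lemma norm_kernel_lt_diameter_slice:
  assumes "bounded_linear f" and "0 < \<alpha>"
    and "x \<in> slice f \<alpha>" and "f y = 0"
    and "diameter (slice f \<alpha>) < d"
    and "norm (x + y) < f x / \<alpha>"
  shows "norm y < d + max 0 (norm (x + y) - 1)"
proof -
  interpret f: bounded_linear f by fact
  define w where "w = x + y"
  have fw: "f w = f x" using assms(4) by (simp add: w_def f.add)
  have fx: "f x > \<alpha>" using assms(3) by (simp add: slice_def)
  show ?thesis
  proof (cases "norm w \<le> 1")
    case True
    then have "w \<in> slice f \<alpha>" using fw fx by (simp add: slice_def)
    from dist_lt_of_diameter_slice[OF this assms(3,5)] show ?thesis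
      by (simp add: w_def dist_norm)
  next
    case False
    have "f w > \<alpha> * norm w"
      using assms(2,6) fw by (simp add: w_def pos_less_divide_eq mult.commute)
    then have "sgn w \<in> slice f \<alpha>" using sgn_in_slice[OF assms(1)] assms(2) by simp
    from dist_lt_of_diameter_slice[OF this assms(3,5)]
    have "norm (sgn w - x) < d" by (simp add: dist_norm)
    moreover have "norm (w - sgn w) = norm w - 1"
      using False norm_diff_sgn[of w] by force
    moreover have "norm y \<le> norm (sgn w - x) + norm (w - sgn w)"
      using norm_triangle_ineq[of "sgn w - x" "w - sgn w"] by (simp add: w_def)
    ultimately show ?thesis using False by (simp add: w_def)
  qed
qed

theorem mainTheorem1:
  fixes x :: "'a::banach" and f :: "'a \<Rightarrow> real" and t \<alpha> :: real
  assumes "norm x = 1" and "0 < t" and "t < 2"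
    and "bounded_linear f" and "onorm f = 1"
    and "0 < \<alpha>" and "\<alpha> < 1"
    and "x \<in> slice f \<alpha>"
    and "diameter (slice f \<alpha>) < t / 5"
  shows "s_param x f t \<ge> ereal (min ((f x - \<alpha>) / \<alpha>) (t / 20))
         \<and> min ((f x - \<alpha>) / \<alpha>) (t / 20) > 0"
proof -
  define m where "m = min ((f x - \<alpha>) / \<alpha>) (t / 20)"
  have "m > 0" using assms(2,6,8) by (simp add: m_def slice_def)
  have "m \<le> norm (x + y) - 1" if "f y = 0" and "norm y \<ge> t / 4" for y
  proof (rule ccontr)
    assume "\<not> m \<le> norm (x + y) - 1"
    moreover have "1 + (f x - \<alpha>) / \<alpha> = f x / \<alpha>" using assms(6) by (simp add: field_simps)
    ultimately have "norm (x + y) < f x / \<alpha>" by (simp add: m_def)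
    from norm_kernel_lt_diameter_slice[OF assms(4,6,8) \<open>f y = 0\<close> assms(9) this]
    have "norm y < t / 5 + max 0 (norm (x + y) - 1)" .
    moreover have "m \<le> t / 20" unfolding m_def by (rule min.cobounded2)
    ultimately show False using \<open>\<not> m \<le> _\<close> \<open>m > 0\<close> \<open>norm y \<ge> t / 4\<close> by linarith
  qed
  then have "ereal m \<le> s_param x f t"
    unfolding s_param_def by (auto intro!: Inf_greatest)
  with \<open>m > 0\<close> show ?thesis by (simp add: m_def)
qed

end
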